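(* Let $(w,F)\in X\times\mathbb R$ be a solution of the height equation. (i) If $w>0$ on $T$, and if $F$ is such that $\Phi_p(p;1/F^2)\ge0$ for $p\in[-1,0]$, then $A(1/F^2)<0$. (ii) If $F=F_{\mathrm{cr}}$, then $w\equiv0$.
   Context: Fix $\alpha\in(0,1)$, $\rho\in C^{2+\alpha}([-1,0])$ with $\rho>0$, $\rho_p\le0$, and $H\in C^{3+\alpha}([-1,0])$ with $H(-1)=0$, $H(0)=1$, $H_p>0$. Let $R=\mathbb R\times(-1,0)$ (coordinates $(q,p)$), $T=\mathbb R\times\{0\}$, $B=\mathbb R\times\{-1\}$. For $F>0$, $(w,F)$ solves the height equation if $h=H+w$ satisfies $\big(-\frac{1+h_q^2}{2h_p^2}+\frac1{2H_p^2}\big)_p+\big(\frac{h_q}{h_p}\big)_q-\frac1{F^2}\rho_p(h-H)=0$ in $R$, $\frac{1+h_q^2}{2h_p^2}-\frac1{2H_p^2}+\frac1{F^2}\rho(h-1)=0$ on $T$, $h=0$ on $B$, and $0<\inf_R(H_p+w_p)<\infty$. $X$ consists of $w\in C^{3+\alpha}(\overline R)$ with finite $C^{3+\alpha}$ norm, even in $q$, with $w$ and its derivatives of order $\le2$ tending to $0$ uniformly as $|q|\to\infty$, and $w=0$ on $B$. For $\mu\ge0$, $\Phi(\cdot;\mu)$ is the solution of $(\Phi_p/H_p^3)_p-\mu\rho_p\Phi=0$ on $(-1,0)$, $\Phi(-1)=0$, $\Phi_p(-1)=1$, and $A(\mu):=-\Phi_p(0;\mu)/H_p(0)^3+\mu\rho(0)\Phi(0;\mu)$.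 $\mu_{\mathrm{cr}}$ is the smallest positive $\mu$ with $A(\mu)=0$ (equivalently, for which $(\phi_p/H_p^3)_p-\mu\rho_p\phi=0$, $\phi(-1)=0$, $-\phi_p(0)/H_p(0)^3+\mu\rho(0)\phi(0)=0$ has a nontrivial solution), and $F_{\mathrm{cr}}=\mu_{\mathrm{cr}}^{-1/2}$. *)

theory Defs
  imports "HOL-Analysis.Analysis"
begin

definition Rbar :: "(real \<times> real) set" where
  "Rbar = UNIV \<times> {-1..0}"

definition Ropen :: "(real \<times> real) set" where
  "Ropen = UNIV \<times> {-1<..<0}"

definition dI :: "(real \<Rightarrow> real) \<Rightarrow> real \<Rightarrow> real" where
  "dI f = (\<lambda>x. vector_derivative f (at x within {-1..0}))"

definition pdq :: "(real \<times> real \<Rightarrow> real) \<Rightarrow> real \<times> real \<Rightarrow> real" where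
  "pdq f = (\<lambda>x. vector_derivative (\<lambda>s. f (s, snd x)) (at (fst x)))"

definition pdp :: "(real \<times> real \<Rightarrow> real) \<Rightarrow> real \<times> real \<Rightarrow> real" where
  "pdp f = (\<lambda>x. vector_derivative (\<lambda>t. f (fst x, t)) (at (snd x) within {-1..0}))"

datatype dir = Dq | Dp

definition pdir :: "dir \<Rightarrow> (real \<times> real \<Rightarrow> real) \<Rightarrow> real \<times> real \<Rightarrow> real" where
  "pdir d = (case d of Dq \<Rightarrow> pdq | Dp \<Rightarrow> pdp)"

text \<open>Iterated partial derivative along a word of directions (the last
  element of the list is applied first).\<close>

fun pd :: "dir list \<Rightarrow> (real \<times> real \<Rightarrow> real) \<Rightarrow> real \<times> real \<Rightarrow> real" where
  "pd [] f = f"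
| "pd (d # ds) f = pdir d (pd ds f)"

definition holder_cont :: "real \<Rightarrow> ('a::metric_space) set \<Rightarrow> ('a \<Rightarrow> real) \<Rightarrow> bool" where
  "holder_cont \<alpha> S g \<longleftrightarrow> (\<exists>C. \<forall>x\<in>S. \<forall>y\<in>S. \<bar>g x - g y\<bar> \<le> C * dist x y powr \<alpha>)"

definition C_ka_I :: "nat \<Rightarrow> real \<Rightarrow> (real \<Rightarrow> real) \<Rightarrow> bool" where
  "C_ka_I k \<alpha> f \<longleftrightarrow>
     (\<forall>j<k. \<forall>x\<in>{-1..0}. ((dI ^^ j) f) differentiable (at x within {-1..0}))
   \<and> continuous_on {-1..0} ((dI ^^ k) f)
   \<and> holder_cont \<alpha> {-1..0} ((dI ^^ k) f)"

definition C_ka_strip :: "nat \<Rightarrow> real \<Rightarrow> (real \<times> real \<Rightarrow> real) \<Rightarrow> bool" where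
  "C_ka_strip k \<alpha> f \<longleftrightarrow>
     (\<forall>ds. length ds < k \<longrightarrow> (\<forall>x\<in>Rbar.
          (\<lambda>s. pd ds f (s, snd x)) differentiable (at (fst x))
        \<and> (\<lambda>t. pd ds f (fst x, t)) differentiable (at (snd x) within {-1..0})))
   \<and> (\<forall>ds. length ds \<le> k \<longrightarrow> continuous_on Rbar (pd ds f) \<and> bounded (pd ds f ` Rbar))
   \<and> (\<forall>ds. length ds = k \<longrightarrow> holder_cont \<alpha> Rbar (pd ds f))"

definition in_X :: "real \<Rightarrow> (real \<times> real \<Rightarrow> real) \<Rightarrow> bool" where
  "in_X \<alpha> w \<longleftrightarrow>
     C_ka_strip 3 \<alpha> w
   \<and> (\<forall>q p. w (-q, p) = w (q, p))
   \<and> (\<forall>ds. length ds \<le> 2 \<longrightarrow>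
        (\<forall>\<epsilon>>0. \<exists>M. \<forall>q p. M \<le> \<bar>q\<bar> \<and> -1 \<le> p \<and> p \<le> 0 \<longrightarrow> \<bar>pd ds w (q, p)\<bar> < \<epsilon>))
   \<and> (\<forall>q. w (q, -1) = 0)"

definition height_eq ::
  "(real \<Rightarrow> real) \<Rightarrow> (real \<Rightarrow> real) \<Rightarrow> (real \<times> real \<Rightarrow> real) \<Rightarrow> real \<Rightarrow> bool" where
  "height_eq H \<rho> w F \<longleftrightarrow>
     (let h = (\<lambda>x. H (snd x) + w x) in
        F > 0
      \<and> (\<forall>x\<in>Ropen.
            pdp (\<lambda>y. - (1 + (pdq h y)\<^sup>2) / (2 * (pdp h y)\<^sup>2) + 1 / (2 * (dI H (snd y))\<^sup>2)) x
          + pdq (\<lambda>y. pdq h y / pdp h y) x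
          - (1 / F\<^sup>2) * dI \<rho> (snd x) * (h x - H (snd x)) = 0)
      \<and> (\<forall>q. (1 + (pdq h (q, 0))\<^sup>2) / (2 * (pdp h (q, 0))\<^sup>2) - 1 / (2 * (dI H 0)\<^sup>2)
              + (1 / F\<^sup>2) * \<rho> 0 * (h (q, 0) - 1) = 0)
      \<and> (\<forall>q. h (q, -1) = 0)
      \<and> (\<exists>\<delta>>0. \<forall>x\<in>Ropen. \<delta> \<le> pdp h x))"

definition Phi_sol :: "(real \<Rightarrow> real) \<Rightarrow> (real \<Rightarrow> real) \<Rightarrow> real \<Rightarrow> (real \<Rightarrow> real) \<Rightarrow> bool" where
  "Phi_sol H \<rho> \<mu> \<phi> \<longleftrightarrow>
     (\<forall>p\<in>{-1..0}. (\<phi> has_real_derivative dI \<phi> p) (at p within {-1..0})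
        \<and> ((\<lambda>s. dI \<phi> s / (dI H s) ^ 3) has_real_derivative \<mu> * dI \<rho> p * \<phi> p)
             (at p within {-1..0}))
   \<and> \<phi> (-1) = 0 \<and> dI \<phi> (-1) = 1"

definition A_fun :: "(real \<Rightarrow> real) \<Rightarrow> (real \<Rightarrow> real) \<Rightarrow> (real \<Rightarrow> real \<Rightarrow> real) \<Rightarrow> real \<Rightarrow> real" where
  "A_fun H \<rho> Phi \<mu> = - dI (Phi \<mu>) 0 / (dI H 0) ^ 3 + \<mu> * \<rho> 0 * Phi \<mu> 0"

definition is_mu_cr :: "(real \<Rightarrow> real) \<Rightarrow> (real \<Rightarrow> real) \<Rightarrow> (real \<Rightarrow> real \<Rightarrow> real) \<Rightarrow> real \<Rightarrow> bool" where
  "is_mu_cr H \<rho> Phi \<mu> \<longleftrightarrow>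
     \<mu> > 0 \<and> A_fun H \<rho> Phi \<mu> = 0 \<and> (\<forall>\<nu>. 0 < \<nu> \<and> \<nu> < \<mu> \<longrightarrow> A_fun H \<rho> Phi \<nu> \<noteq> 0)"

end

theory Submission
  imports Defs
begin

text \<open>Let \<open>\<mu> = 1/F\<^sup>2\<close>, \<open>h = H + w\<close> and \<open>\<psi> = \<Phi>\<^sub>p / H\<^sub>p\<^sup>3\<close>, so that \<open>\<Phi>\<^sub>p = H\<^sub>p\<^sup>3 \<psi>\<close> and
  \<open>\<psi>\<^sub>p = \<mu> \<rho>\<^sub>p \<Phi>\<close>. Multiplying the height equation by \<open>\<Phi>\<close>, integrating over \<open>p\<close> and using
  both boundary conditions gives for every \<open>q\<close> the balance law
  \<open>A(\<mu>) w(q,0) + M'(q) + G(q) = 0\<close>, where \<open>M(q) = \<integral> \<Phi> h\<^sub>q/h\<^sub>p dp\<close> and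
  \<open>G(q) = \<integral> \<psi> (H\<^sub>p\<^sup>3 E + w\<^sub>p) dp\<close> with \<open>E\<close> the Bernoulli expression of the top condition.
  The integrand of \<open>G\<close> is \<open>\<psi>\<close> times a sum of squares, so \<open>G \<ge> 0\<close> when \<open>\<psi> \<ge> 0\<close>.
  If moreover \<open>A(\<mu>) w(q,0) \<ge> 0\<close> for \<open>q \<ge> 0\<close>, then \<open>M\<close> is nonincreasing on \<open>[0,\<infinity>)\<close>, vanishes at
  \<open>q = 0\<close> by evenness and at infinity by decay, hence vanishes identically; thus
  \<open>A(\<mu>) w(q,0) = G(q) = 0\<close>, and where \<open>\<psi> > 0\<close> this forces \<open>h\<^sub>q = 0\<close>, i.e. \<open>w = 0\<close>.

  For (i), \<open>A(\<mu>) \<ge> 0\<close> would give \<open>A(\<mu>) = 0\<close>; but since \<open>\<rho>\<^sub>p \<le> 0\<close>, \<open>\<psi>\<close> is nonincreasing and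
  \<open>A(\<mu>) = \<mu> \<rho>(0) \<Phi>(0) - \<psi>(0) > 0\<close> as soon as \<open>\<psi>\<close> has a zero, so \<open>\<psi> > 0\<close> and \<open>w = 0\<close>,
  contradicting \<open>w > 0\<close> on the top. For (ii), \<open>\<psi>(\<cdot>;\<mu>) > 0\<close> for all \<open>\<mu> \<le> \<mu>\<^sub>c\<^sub>r\<close>: otherwise
  \<open>min \<psi>\<close>, which depends continuously on \<open>\<mu>\<close> and is positive at \<open>\<mu> = 0\<close>, would vanish at some
  \<open>\<mu>\<^sub>1 \<le> \<mu>\<^sub>c\<^sub>r\<close>, where then \<open>A(\<mu>\<^sub>1) > 0 > A(0)\<close>, giving a zero of \<open>A\<close> below \<open>\<mu>\<^sub>c\<^sub>r\<close>.\<close>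

lemma continuous_on_if_has_real_derivative_within:
  assumes "\<And>t. t \<in> S \<Longrightarrow> (f has_real_derivative f' t) (at t within S)"
  shows "continuous_on S f"
  unfolding continuous_on_eq_continuous_within using DERIV_continuous[OF assms] by blast

lemma deriv_within_nonpos_imp_antimono:
  fixes f :: "real \<Rightarrow> real"
  assumes deriv: "\<And>t. t \<in> {a..b} \<Longrightarrow> (f has_real_derivative f' t) (at t within {a..b})"
    and nonpos: "\<And>t. t \<in> {a..b} \<Longrightarrow> f' t \<le> 0"
    and "a \<le> x" "x \<le> y" "y \<le> b"
  shows "f y \<le> f x"
proof (rule DERIV_nonpos_imp_decreasing_open[OF \<open>x \<le> y\<close>])
  fix t assume t: "x < t" "t < y"
  then have "t \<in> {a..b}" "at t within {a..b} = at t"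
    using assms by (auto intro!: at_within_interior)
  then show "\<exists>D. (f has_real_derivative D) (at t) \<and> D \<le> 0"
    using deriv nonpos by metis
next
  have "continuous_on {a..b} f"
    using deriv by (rule continuous_on_if_has_real_derivative_within)
  then show "continuous_on {x..y} f"
    by (rule continuous_on_subset) (use assms in auto)
qed

lemma deriv_within_nonneg_imp_mono:
  fixes f :: "real \<Rightarrow> real"
  assumes deriv: "\<And>t. t \<in> {a..b} \<Longrightarrow> (f has_real_derivative f' t) (at t within {a..b})"
    and nonneg: "\<And>t. t \<in> {a..b} \<Longrightarrow> f' t \<ge> 0"
    and "a \<le> x" "x \<le> y" "y \<le> b"
  shows "f x \<le> f y"
  using deriv_within_nonpos_imp_antimono[of a b "\<lambda>t. - f t" "\<lambda>t. - f' t" x y]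
    deriv nonneg assms by (auto intro: DERIV_minus)

lemma gronwall_Icc:
  fixes f :: "real \<Rightarrow> real"
  assumes deriv: "\<And>t. t \<in> {a..b} \<Longrightarrow> (f has_real_derivative f' t) (at t within {a..b})"
    and growth: "\<And>t. t \<in> {a..b} \<Longrightarrow> f' t \<le> c * f t + k"
    and "c > 0" "k \<ge> 0" "a \<le> x" "x \<le> b"
  shows "f x \<le> (f a + k / c) * exp (c * (x - a))"
proof -
  define g where "g t = (f t + k / c) * exp (- c * (t - a))" for t
  have "(g has_real_derivative (f' t - c * f t - k) * exp (- c * (t - a))) (at t within {a..b})"
    if "t \<in> {a..b}" for t
    unfolding g_def using deriv[OF that] \<open>c > 0\<close>
    by (auto intro!: derivative_eq_intros simp: field_simps)
  then have "g x \<le> g a"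
    by (rule deriv_within_nonpos_imp_antimono)
       (use growth assms in \<open>fastforce intro!: mult_nonpos_nonneg\<close>)+
  then have "(f x + k / c) * exp (- c * (x - a)) * exp (c * (x - a))
      \<le> (f a + k / c) * exp (c * (x - a))"
    by (simp add: g_def)
  then have "f x + k / c \<le> (f a + k / c) * exp (c * (x - a))"
    by (simp add: mult.assoc flip: exp_add)
  moreover have "k / c \<ge> 0" using assms by simp
  ultimately show ?thesis by linarith
qed

lemma continuous_on_Icc_abs_bound:
  fixes f :: "real \<Rightarrow> real"
  assumes "continuous_on {a..b} f"
  shows "\<exists>B\<ge>0. \<forall>x\<in>{a..b}. \<bar>f x\<bar> \<le> B"
proof -
  have "bounded (f ` {a..b})"
    by (intro compact_imp_bounded compact_continuous_image assms compact_Icc)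
  then obtain B where "\<forall>y\<in>f ` {a..b}. norm y \<le> B"
    unfolding bounded_iff by blast
  then show ?thesis by (intro exI[of _ "max B 0"]) force
qed

text \<open>\<open>(X\<^sup>2 + Y\<^sup>2)' = 2 X Y (\<alpha> + \<beta>) + 2 Y \<gamma>\<close>, so Gronwall applies with rate \<open>K + 1\<close>.\<close>

lemma linear_system_energy_bound:
  fixes X Y \<alpha> \<beta> \<gamma> :: "real \<Rightarrow> real"
  assumes dX: "\<And>t. t \<in> {a..b} \<Longrightarrow> (X has_real_derivative \<alpha> t * Y t) (at t within {a..b})"
    and dY: "\<And>t. t \<in> {a..b} \<Longrightarrow> (Y has_real_derivative \<beta> t * X t + \<gamma> t) (at t within {a..b})"
    and coeff: "\<And>t. t \<in> {a..b} \<Longrightarrow> \<bar>\<alpha> t + \<beta> t\<bar> \<le> K"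
    and inhom: "\<And>t. t \<in> {a..b} \<Longrightarrow> (\<gamma> t)\<^sup>2 \<le> k"
    and "K \<ge> 0" "k \<ge> 0" "x \<in> {a..b}"
  shows "(X x)\<^sup>2 + (Y x)\<^sup>2 \<le> ((X a)\<^sup>2 + (Y a)\<^sup>2 + k / (K + 1)) * exp ((K + 1) * (b - a))"
proof -
  have "(X x)\<^sup>2 + (Y x)\<^sup>2 \<le> ((X a)\<^sup>2 + (Y a)\<^sup>2 + k / (K + 1)) * exp ((K + 1) * (x - a))"
  proof (rule gronwall_Icc)
    fix t assume t: "t \<in> {a..b}"
    show "((\<lambda>t. (X t)\<^sup>2 + (Y t)\<^sup>2) has_real_derivative
            2 * X t * Y t * (\<alpha> t + \<beta> t) + 2 * Y t * \<gamma> t) (at t within {a..b})"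
      using dX[OF t] dY[OF t] by (auto intro!: derivative_eq_intros simp: algebra_simps)
    have "2 * X t * Y t * (\<alpha> t + \<beta> t) \<le> \<bar>2 * X t * Y t\<bar> * \<bar>\<alpha> t + \<beta> t\<bar>"
      by (metis abs_ge_self abs_mult)
    also have "\<dots> \<le> ((X t)\<^sup>2 + (Y t)\<^sup>2) * K"
      using sum_squares_bound[of "\<bar>X t\<bar>" "\<bar>Y t\<bar>"] coeff[OF t]
      by (intro mult_mono) (simp_all add: abs_mult)
    finally have "2 * X t * Y t * (\<alpha> t + \<beta> t) \<le> ((X t)\<^sup>2 + (Y t)\<^sup>2) * K" .
    moreover have "2 * Y t * \<gamma> t \<le> (Y t)\<^sup>2 + k"
      using inhom[OF t] sum_squares_bound[of "Y t" "\<gamma> t"] by (simp add: power2_eq_square)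
    ultimately show "2 * X t * Y t * (\<alpha> t + \<beta> t) + 2 * Y t * \<gamma> t
        \<le> (K + 1) * ((X t)\<^sup>2 + (Y t)\<^sup>2) + k"
      by (simp add: algebra_simps) (use zero_le_power2[of "X t"] in linarith)
  next
    show "K + 1 > 0" using \<open>K \<ge> 0\<close> by simp
  qed (use assms in simp_all)
  also have "\<dots> \<le> ((X a)\<^sup>2 + (Y a)\<^sup>2 + k / (K + 1)) * exp ((K + 1) * (b - a))"
    using assms by (intro mult_left_mono) simp_all
  finally show ?thesis .
qed

lemma has_real_derivative_vector_derivative:
  fixes f :: "real \<Rightarrow> real"
  shows "f differentiable F \<Longrightarrow> (f has_real_derivative vector_derivative f F) F"
  using vector_derivative_works[of f F] by (simp add: has_real_derivative_iff_has_vector_derivative)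

lemma integral_has_integral_Icc:
  "continuous_on {a..b} (f :: real \<Rightarrow> real) \<Longrightarrow> (f has_integral integral {a..b} f) {a..b}"
  by (intro integrable_integral integrable_continuous_interval)

lemma Bernoulli_excess_identity:
  fixes a c b :: real
  assumes "a > 0" "c > 0"
  shows "c ^ 3 * ((1 + b\<^sup>2) / (2 * a\<^sup>2) - 1 / (2 * c\<^sup>2)) + (a - c)
       = c ^ 3 * b\<^sup>2 / (2 * a\<^sup>2) + (a - c)\<^sup>2 * (2 * a + c) / (2 * a\<^sup>2)"
  using assms by (simp add: field_simps power2_eq_square power3_eq_cube)

section \<open>The family \<open>\<Phi>(\<cdot>;\<mu>)\<close>\<close>

locale Phi_family =
  fixes H \<rho> :: "real \<Rightarrow> real" and Phi :: "real \<Rightarrow> real \<Rightarrow> real"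
  assumes Hp_cont: "continuous_on {-1..0} (dI H)"
    and rho_p_cont: "continuous_on {-1..0} (dI \<rho>)"
    and Hp_pos: "\<forall>p\<in>{-1..0}. dI H p > 0"
    and Phi_sol: "\<forall>\<mu>\<ge>0. Phi_sol H \<rho> \<mu> (Phi \<mu>)"
begin

definition psi :: "real \<Rightarrow> real \<Rightarrow> real" where
  "psi \<mu> p = dI (Phi \<mu>) p / (dI H p) ^ 3"

lemma psi_has_derivative:
  "\<mu> \<ge> 0 \<Longrightarrow> p \<in> {-1..0} \<Longrightarrow>
    (psi \<mu> has_real_derivative \<mu> * dI \<rho> p * Phi \<mu> p) (at p within {-1..0})"
  using Phi_sol unfolding Phi_sol_def psi_def[abs_def] by blast

lemma Phi_has_derivative:
  assumes "\<mu> \<ge> 0" "p \<in> {-1..0}"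
  shows "(Phi \<mu> has_real_derivative (dI H p) ^ 3 * psi \<mu> p) (at p within {-1..0})"
proof -
  have "dI H p \<noteq> 0" using Hp_pos assms by force
  then have "(dI H p) ^ 3 * psi \<mu> p = dI (Phi \<mu>) p" by (simp add: psi_def)
  then show ?thesis using Phi_sol assms unfolding Phi_sol_def by auto
qed

lemma Phi_bottom: "\<mu> \<ge> 0 \<Longrightarrow> Phi \<mu> (-1) = 0"
  using Phi_sol unfolding Phi_sol_def by auto

lemma psi_bottom: "\<mu> \<ge> 0 \<Longrightarrow> psi \<mu> (-1) = 1 / (dI H (-1)) ^ 3"
  using Phi_sol unfolding Phi_sol_def psi_def by auto

lemma psi_nonneg_if_Phi_p_nonneg:
  assumes "p \<in> {-1..0}" "dI (Phi \<mu>) p \<ge> 0"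
  shows "psi \<mu> p \<ge> 0"
proof -
  have "dI H p > 0" using Hp_pos assms(1) by blast
  then show ?thesis using assms(2) by (simp add: psi_def)
qed

lemma A_fun_eq: "A_fun H \<rho> Phi \<mu> = \<mu> * \<rho> 0 * Phi \<mu> 0 - psi \<mu> 0"
  unfolding A_fun_def psi_def by simp

lemma Phi_continuous_on: "\<mu> \<ge> 0 \<Longrightarrow> continuous_on {-1..0} (Phi \<mu>)"
  by (rule continuous_on_if_has_real_derivative_within[OF Phi_has_derivative])

lemma psi_continuous_on: "\<mu> \<ge> 0 \<Longrightarrow> continuous_on {-1..0} (psi \<mu>)"
  by (rule continuous_on_if_has_real_derivative_within[OF psi_has_derivative])

lemma coefficient_bounds:
  assumes "\<Lambda> \<ge> 0"
  obtains K R where "K \<ge> 0" "R \<ge> 0" "\<And>p. p \<in> {-1..0} \<Longrightarrow> \<bar>dI \<rho> p\<bar> \<le> R"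
    "\<And>\<mu> p. \<mu> \<in> {0..\<Lambda>} \<Longrightarrow> p \<in> {-1..0} \<Longrightarrow> \<bar>(dI H p) ^ 3 + \<mu> * dI \<rho> p\<bar> \<le> K"
proof -
  have "continuous_on {-1..0} (\<lambda>p. (dI H p) ^ 3)"
    using Hp_cont by (rule continuous_on_power)
  then obtain K where K: "K \<ge> 0" "\<forall>p\<in>{-1..0}. \<bar>(dI H p) ^ 3\<bar> \<le> K"
    using continuous_on_Icc_abs_bound by blast
  obtain R where R: "R \<ge> 0" "\<forall>p\<in>{-1..0}. \<bar>dI \<rho> p\<bar> \<le> R"
    using continuous_on_Icc_abs_bound[OF rho_p_cont] by blast
  have "\<bar>(dI H p) ^ 3 + \<mu> * dI \<rho> p\<bar> \<le> K + \<Lambda> * R"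
    if "\<mu> \<in> {0..\<Lambda>}" "p \<in> {-1..0}" for \<mu> p
  proof -
    have "\<bar>\<mu> * dI \<rho> p\<bar> \<le> \<Lambda> * R"
      using R that by (auto simp: abs_mult intro!: mult_mono)
    then show ?thesis
      using K that by (meson abs_triangle_ineq add_mono order_trans)
  qed
  then show ?thesis
    using K R assms by (intro that[of "K + \<Lambda> * R" R]) simp_all
qed

lemma Phi_psi_bounded:
  assumes "\<Lambda> \<ge> 0"
  obtains B where "\<And>\<mu> p. \<mu> \<in> {0..\<Lambda>} \<Longrightarrow> p \<in> {-1..0} \<Longrightarrow> (Phi \<mu> p)\<^sup>2 + (psi \<mu> p)\<^sup>2 \<le> B"
proof -
  obtain K R where KR: "K \<ge> 0"
    "\<And>\<mu> p. \<mu> \<in> {0..\<Lambda>} \<Longrightarrow> p \<in> {-1..0} \<Longrightarrow> \<bar>(dI H p) ^ 3 + \<mu> * dI \<rho> p\<bar> \<le> K"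
    using coefficient_bounds[OF assms] by metis
  have "(Phi \<mu> p)\<^sup>2 + (psi \<mu> p)\<^sup>2 \<le> (1 / (dI H (-1)) ^ 3)\<^sup>2 * exp (K + 1)"
    if \<mu>: "\<mu> \<in> {0..\<Lambda>}" and p: "p \<in> {-1..0}" for \<mu> p
  proof -
    have "(Phi \<mu> p)\<^sup>2 + (psi \<mu> p)\<^sup>2
        \<le> ((Phi \<mu> (-1))\<^sup>2 + (psi \<mu> (-1))\<^sup>2 + 0 / (K + 1)) * exp ((K + 1) * (0 - (-1)))"
    proof (rule linear_system_energy_bound[where \<gamma> = "\<lambda>_. 0"])
      fix t :: real assume t: "t \<in> {-1..0}"
      show "(Phi \<mu> has_real_derivative (dI H t) ^ 3 * psi \<mu> t) (at t within {-1..0})"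
        using Phi_has_derivative \<mu> t by simp
      show "(psi \<mu> has_real_derivative \<mu> * dI \<rho> t * Phi \<mu> t + 0) (at t within {-1..0})"
        using psi_has_derivative \<mu> t by simp
      show "\<bar>(dI H t) ^ 3 + \<mu> * dI \<rho> t\<bar> \<le> K" using KR(2)[OF \<mu> t] .
    qed (use KR \<mu> p in simp_all)
    then show ?thesis using \<mu> by (simp add: Phi_bottom psi_bottom)
  qed
  then show ?thesis by (rule that)
qed

lemma Phi_psi_difference_bound:
  assumes "\<Lambda> \<ge> 0"
  obtains C where "C \<ge> 0" "\<And>\<mu> \<nu> p. \<mu> \<in> {0..\<Lambda>} \<Longrightarrow> \<nu> \<in> {0..\<Lambda>} \<Longrightarrow> p \<in> {-1..0} \<Longrightarrow>
    (Phi \<mu> p - Phi \<nu> p)\<^sup>2 + (psi \<mu> p - psi \<nu> p)\<^sup>2 \<le> C * (\<mu> - \<nu>)\<^sup>2"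
proof -
  obtain K R where KR: "K \<ge> 0" "R \<ge> 0" "\<And>p. p \<in> {-1..0} \<Longrightarrow> \<bar>dI \<rho> p\<bar> \<le> R"
    "\<And>\<mu> p. \<mu> \<in> {0..\<Lambda>} \<Longrightarrow> p \<in> {-1..0} \<Longrightarrow> \<bar>(dI H p) ^ 3 + \<mu> * dI \<rho> p\<bar> \<le> K"
    using coefficient_bounds[OF assms] by metis
  obtain B where B: "\<And>\<mu> p. \<mu> \<in> {0..\<Lambda>} \<Longrightarrow> p \<in> {-1..0} \<Longrightarrow> (Phi \<mu> p)\<^sup>2 + (psi \<mu> p)\<^sup>2 \<le> B"
    using Phi_psi_bounded[OF assms] by metis
  define C where "C = R\<^sup>2 * \<bar>B\<bar> / (K + 1) * exp (K + 1)"
  have "(Phi \<mu> p - Phi \<nu> p)\<^sup>2 + (psi \<mu> p - psi \<nu> p)\<^sup>2 \<le> C * (\<mu> - \<nu>)\<^sup>2"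
    if \<mu>: "\<mu> \<in> {0..\<Lambda>}" and \<nu>: "\<nu> \<in> {0..\<Lambda>}" and p: "p \<in> {-1..0}" for \<mu> \<nu> p
  proof -
    \<comment> \<open>the difference solves the system for \<open>\<mu>\<close> with the forcing \<open>(\<mu> - \<nu>) \<rho>\<^sub>p \<Phi>(\<nu>)\<close>\<close>
    have "(Phi \<mu> p - Phi \<nu> p)\<^sup>2 + (psi \<mu> p - psi \<nu> p)\<^sup>2
        \<le> ((Phi \<mu> (-1) - Phi \<nu> (-1))\<^sup>2 + (psi \<mu> (-1) - psi \<nu> (-1))\<^sup>2
            + (\<mu> - \<nu>)\<^sup>2 * (R\<^sup>2 * \<bar>B\<bar>) / (K + 1)) * exp ((K + 1) * (0 - (-1)))"
    proof (rule linear_system_energy_bound[where \<gamma> = "\<lambda>t. (\<mu> - \<nu>) * dI \<rho> t * Phi \<nu> t"])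
      fix t :: real assume t: "t \<in> {-1..0}"
      show "((\<lambda>t. Phi \<mu> t - Phi \<nu> t) has_real_derivative (dI H t) ^ 3 * (psi \<mu> t - psi \<nu> t))
          (at t within {-1..0})"
        using DERIV_diff[OF Phi_has_derivative Phi_has_derivative, of \<mu> t \<nu>] \<mu> \<nu> t
        by (simp add: algebra_simps)
      show "((\<lambda>t. psi \<mu> t - psi \<nu> t) has_real_derivative
          \<mu> * dI \<rho> t * (Phi \<mu> t - Phi \<nu> t) + (\<mu> - \<nu>) * dI \<rho> t * Phi \<nu> t) (at t within {-1..0})"
        using DERIV_diff[OF psi_has_derivative psi_has_derivative, of \<mu> t \<nu>] \<mu> \<nu> t
        by (simp add: algebra_simps)
      show "\<bar>(dI H t) ^ 3 + \<mu> * dI \<rho> t\<bar> \<le> K" using KR(4)[OF \<mu> t] .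
      have "(dI \<rho> t)\<^sup>2 * (Phi \<nu> t)\<^sup>2 \<le> R\<^sup>2 * \<bar>B\<bar>"
      proof (rule mult_mono)
        show "(dI \<rho> t)\<^sup>2 \<le> R\<^sup>2" using KR(3)[OF t] abs_le_square_iff[of "dI \<rho> t" R] KR(2) by simp
        show "(Phi \<nu> t)\<^sup>2 \<le> \<bar>B\<bar>" using B[OF \<nu> t] zero_le_power2[of "psi \<nu> t"] by linarith
      qed simp_all
      then show "((\<mu> - \<nu>) * dI \<rho> t * Phi \<nu> t)\<^sup>2 \<le> (\<mu> - \<nu>)\<^sup>2 * (R\<^sup>2 * \<bar>B\<bar>)"
        by (simp add: power_mult_distrib mult_left_mono mult.assoc)
    qed (use KR p in simp_all)
    then show ?thesis using \<mu> \<nu> by (simp add: Phi_bottom psi_bottom C_def field_simps)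
  qed
  moreover have "C \<ge> 0" using KR by (simp add: C_def)
  ultimately show ?thesis by (rule that[rotated])
qed

lemma Phi_psi_lipschitz:
  assumes "\<Lambda> \<ge> 0"
  obtains L where "\<And>p. p \<in> {-1..0} \<Longrightarrow> L-lipschitz_on {0..\<Lambda>} (\<lambda>\<mu>. Phi \<mu> p)"
    "\<And>p. p \<in> {-1..0} \<Longrightarrow> L-lipschitz_on {0..\<Lambda>} (\<lambda>\<mu>. psi \<mu> p)"
proof -
  obtain C where C: "C \<ge> 0" "\<And>\<mu> \<nu> p. \<mu> \<in> {0..\<Lambda>} \<Longrightarrow> \<nu> \<in> {0..\<Lambda>} \<Longrightarrow> p \<in> {-1..0} \<Longrightarrow>
    (Phi \<mu> p - Phi \<nu> p)\<^sup>2 + (psi \<mu> p - psi \<nu> p)\<^sup>2 \<le> C * (\<mu> - \<nu>)\<^sup>2"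
    using Phi_psi_difference_bound[OF assms] by metis
  have "\<bar>Phi \<mu> p - Phi \<nu> p\<bar> \<le> sqrt C * \<bar>\<mu> - \<nu>\<bar> \<and> \<bar>psi \<mu> p - psi \<nu> p\<bar> \<le> sqrt C * \<bar>\<mu> - \<nu>\<bar>"
    if "\<mu> \<in> {0..\<Lambda>}" "\<nu> \<in> {0..\<Lambda>}" "p \<in> {-1..0}" for \<mu> \<nu> p
  proof -
    have "C * (\<mu> - \<nu>)\<^sup>2 = (sqrt C * \<bar>\<mu> - \<nu>\<bar>)\<^sup>2"
      using C(1) by (simp add: power_mult_distrib)
    then have "(Phi \<mu> p - Phi \<nu> p)\<^sup>2 \<le> (sqrt C * \<bar>\<mu> - \<nu>\<bar>)\<^sup>2"
      "(psi \<mu> p - psi \<nu> p)\<^sup>2 \<le> (sqrt C * \<bar>\<mu> - \<nu>\<bar>)\<^sup>2"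
      using C(2)[OF that] zero_le_power2[of "Phi \<mu> p - Phi \<nu> p"]
        zero_le_power2[of "psi \<mu> p - psi \<nu> p"] by linarith+
    then show ?thesis
      using abs_le_square_iff[of _ "sqrt C * \<bar>\<mu> - \<nu>\<bar>"] C(1) by (simp add: abs_mult)
  qed
  then show ?thesis
    by (intro that[of "sqrt C"]) (auto intro!: lipschitz_onI simp: dist_real_def C(1))
qed

definition psi_min :: "real \<Rightarrow> real" where
  "psi_min \<mu> = (INF p\<in>{-1..0}. psi \<mu> p)"

lemma psi_min_attained:
  assumes "\<mu> \<ge> 0"
  obtains p where "p \<in> {-1..0}" "psi_min \<mu> = psi \<mu> p"
    "\<And>q. q \<in> {-1..0} \<Longrightarrow> psi \<mu> p \<le> psi \<mu> q"
proof -
  obtain p where p: "p \<in> {-1..0}" "\<forall>q\<in>{-1..0}. psi \<mu> p \<le> psi \<mu> q"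
    using continuous_attains_inf[OF compact_Icc _ psi_continuous_on[OF assms]] by auto
  then have "psi_min \<mu> = psi \<mu> p"
    unfolding psi_min_def by (intro cInf_eq_minimum) auto
  with p show ?thesis using that by blast
qed

lemma psi_min_le:
  assumes "\<mu> \<ge> 0" "p \<in> {-1..0}"
  shows "psi_min \<mu> \<le> psi \<mu> p"
proof -
  obtain q where "q \<in> {-1..0}" "psi_min \<mu> = psi \<mu> q"
    "\<And>r. r \<in> {-1..0} \<Longrightarrow> psi \<mu> q \<le> psi \<mu> r"
    using assms(1) by (rule psi_min_attained) blast
  then show ?thesis using assms(2) by simp
qed

lemma psi_min_continuous_on:
  assumes "\<Lambda> \<ge> 0"
  shows "continuous_on {0..\<Lambda>} psi_min"
proof -
  obtain L where "\<And>p. p \<in> {-1..0} \<Longrightarrow> L-lipschitz_on {0..\<Lambda>} (\<lambda>\<mu>. Phi \<mu> p)"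
    and L: "\<And>p. p \<in> {-1..0} \<Longrightarrow> L-lipschitz_on {0..\<Lambda>} (\<lambda>\<mu>. psi \<mu> p)"
    using assms by (rule Phi_psi_lipschitz) blast
  have L0: "L \<ge> 0" using lipschitz_on_nonneg[OF L[of 0]] by simp
  have le: "psi_min \<mu> \<le> psi_min \<nu> + L * \<bar>\<mu> - \<nu>\<bar>"
    if \<mu>: "\<mu> \<in> {0..\<Lambda>}" and \<nu>: "\<nu> \<in> {0..\<Lambda>}" for \<mu> \<nu>
  proof -
    have "\<nu> \<ge> 0" using \<nu> by simp
    then obtain p where p: "p \<in> {-1..0}" "psi_min \<nu> = psi \<nu> p"
      "\<And>r. r \<in> {-1..0} \<Longrightarrow> psi \<nu> p \<le> psi \<nu> r"
      by (rule psi_min_attained) blast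
    have "psi_min \<mu> \<le> psi \<mu> p" using psi_min_le[of \<mu> p] p \<mu> by simp
    also have "\<dots> \<le> psi \<nu> p + L * \<bar>\<mu> - \<nu>\<bar>"
      using lipschitz_onD[OF L[OF p(1)] \<mu> \<nu>] by (simp add: dist_real_def)
    finally show ?thesis using p by simp
  qed
  have "L-lipschitz_on {0..\<Lambda>} psi_min"
  proof (rule lipschitz_onI)
    fix \<mu> \<nu> assume "\<mu> \<in> {0..\<Lambda>}" "\<nu> \<in> {0..\<Lambda>}"
    then show "dist (psi_min \<mu>) (psi_min \<nu>) \<le> L * dist \<mu> \<nu>"
      using le[of \<mu> \<nu>] le[of \<nu> \<mu>] by (simp add: dist_real_def abs_minus_commute abs_le_iff)
  qed (rule L0)
  then show ?thesis by (rule lipschitz_on_continuous_on)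
qed

lemma A_fun_continuous_on:
  assumes "\<Lambda> \<ge> 0"
  shows "continuous_on {0..\<Lambda>} (A_fun H \<rho> Phi)"
proof -
  obtain L where L: "\<And>p. p \<in> {-1..0} \<Longrightarrow> L-lipschitz_on {0..\<Lambda>} (\<lambda>\<mu>. Phi \<mu> p)"
    "\<And>p. p \<in> {-1..0} \<Longrightarrow> L-lipschitz_on {0..\<Lambda>} (\<lambda>\<mu>. psi \<mu> p)"
    using assms by (rule Phi_psi_lipschitz) blast
  have "continuous_on {0..\<Lambda>} (\<lambda>\<mu>. Phi \<mu> 0)" "continuous_on {0..\<Lambda>} (\<lambda>\<mu>. psi \<mu> 0)"
    using lipschitz_on_continuous_on[OF L(1)] lipschitz_on_continuous_on[OF L(2)] by simp_all
  then have "continuous_on {0..\<Lambda>} (\<lambda>\<mu>. \<mu> * \<rho> 0 * Phi \<mu> 0 - psi \<mu> 0)"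
    by (intro continuous_intros)
  then show ?thesis by (simp add: A_fun_eq[abs_def])
qed

lemma psi_zero_pos:
  assumes "p \<in> {-1..0}"
  shows "psi 0 p > 0"
proof -
  have "(psi 0 has_field_derivative 0) (at x within {-1..0})" if "x \<in> {-1..0}" for x
    using psi_has_derivative[OF order_refl that] by simp
  then obtain c where "\<forall>x\<in>{-1..0}. psi 0 x = c"
    using has_field_derivative_zero_constant[OF convex_real_interval(5)] by blast
  then have "psi 0 p = psi 0 (-1)" using assms by auto
  then show ?thesis using Hp_pos by (simp add: psi_bottom)
qed

lemma A_fun_at_zero_neg: "A_fun H \<rho> Phi 0 < 0"
  using psi_zero_pos[of 0] by (simp add: A_fun_eq)

end

locale stratified_Phi_family = Phi_family +
  assumes rho_p_nonpos: "\<forall>p\<in>{-1..0}. dI \<rho> p \<le> 0"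
    and rho_top_pos: "\<rho> 0 > 0"
begin

context
  fixes \<mu> :: real
  assumes mu_nonneg: "\<mu> \<ge> 0" and psi_nonneg: "\<forall>p\<in>{-1..0}. psi \<mu> p \<ge> 0"
begin

lemma Phi_mono: "-1 \<le> x \<Longrightarrow> x \<le> y \<Longrightarrow> y \<le> 0 \<Longrightarrow> Phi \<mu> x \<le> Phi \<mu> y"
proof (rule deriv_within_nonneg_imp_mono[OF Phi_has_derivative[OF mu_nonneg]])
  fix t :: real assume t: "t \<in> {-1..0}"
  have "0 \<le> dI H t ^ 3" using Hp_pos t by (simp add: less_imp_le)
  then show "0 \<le> dI H t ^ 3 * psi \<mu> t" using psi_nonneg t by simp
qed

lemma Phi_nonneg: "p \<in> {-1..0} \<Longrightarrow> Phi \<mu> p \<ge> 0"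
  using Phi_mono[of "-1" p] Phi_bottom[OF mu_nonneg] by simp

lemma psi_antimono: "-1 \<le> x \<Longrightarrow> x \<le> y \<Longrightarrow> y \<le> 0 \<Longrightarrow> psi \<mu> y \<le> psi \<mu> x"
proof (rule deriv_within_nonpos_imp_antimono[OF psi_has_derivative[OF mu_nonneg]])
  fix t :: real assume t: "t \<in> {-1..0}"
  have "\<mu> * dI \<rho> t \<le> 0" using mu_nonneg rho_p_nonpos t by (simp add: mult_nonneg_nonpos)
  then show "\<mu> * dI \<rho> t * Phi \<mu> t \<le> 0" using Phi_nonneg[OF t] by (simp add: mult_nonpos_nonneg)
qed

text \<open>\<open>\<Phi>\<close> leaves the bottom with slope \<open>H\<^sub>p\<^sup>3 \<psi> = 1\<close> and never decreases.\<close>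

lemma Phi_top_pos: "Phi \<mu> 0 > 0"
proof -
  have "(Phi \<mu> has_real_derivative 1) (at (-1) within {-1..0})"
    using Phi_has_derivative[OF mu_nonneg, of "-1"] Hp_pos
    by (simp add: psi_bottom[OF mu_nonneg] less_imp_neq[symmetric])
  then have "\<exists>d>0. \<forall>h>0. -1 + h \<in> {-1..0} \<longrightarrow> h < d \<longrightarrow> Phi \<mu> (-1) < Phi \<mu> (-1 + h)"
    by (rule has_real_derivative_pos_inc_right) simp
  then obtain d where d: "d > 0"
    "\<And>h. h > 0 \<Longrightarrow> -1 + h \<in> {-1..0} \<Longrightarrow> h < d \<Longrightarrow> Phi \<mu> (-1) < Phi \<mu> (-1 + h)"
    by blast
  define h where "h = min (d / 2) 1"
  have "0 < Phi \<mu> (-1 + h)"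
    using d Phi_bottom[OF mu_nonneg] by (simp add: h_def)
  also have "\<dots> \<le> Phi \<mu> 0" using d by (intro Phi_mono) (auto simp: h_def)
  finally show ?thesis .
qed

lemma A_fun_pos_if_psi_vanishes:
  assumes "\<mu> > 0" "p \<in> {-1..0}" "psi \<mu> p \<le> 0"
  shows "A_fun H \<rho> Phi \<mu> > 0"
proof -
  have "psi \<mu> 0 \<le> 0" using psi_antimono[of p 0] assms by auto
  moreover have "\<mu> * \<rho> 0 * Phi \<mu> 0 > 0" using assms rho_top_pos Phi_top_pos by simp
  ultimately show ?thesis by (simp add: A_fun_eq)
qed

end

lemma psi_pos_if_critical:
  assumes cr: "is_mu_cr H \<rho> Phi \<mu>c" and p: "p \<in> {-1..0}"
  shows "psi \<mu>c p > 0"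
proof (rule ccontr)
  assume "\<not> psi \<mu>c p > 0"
  have mc: "\<mu>c > 0" "\<And>\<nu>. 0 < \<nu> \<Longrightarrow> \<nu> < \<mu>c \<Longrightarrow> A_fun H \<rho> Phi \<nu> \<noteq> 0"
    using cr unfolding is_mu_cr_def by auto
  have "psi_min \<mu>c \<le> 0" using psi_min_le[of \<mu>c p] mc(1) p \<open>\<not> psi \<mu>c p > 0\<close> by simp
  moreover have "psi_min 0 > 0"
  proof -
    obtain q where "q \<in> {-1..0}" "psi_min 0 = psi 0 q"
      "\<And>r. r \<in> {-1..0} \<Longrightarrow> psi 0 q \<le> psi 0 r"
      by (rule psi_min_attained[OF order_refl]) blast
    then show ?thesis using psi_zero_pos by simp
  qed
  ultimately obtain \<mu>1 where \<mu>1: "0 \<le> \<mu>1" "\<mu>1 \<le> \<mu>c" "psi_min \<mu>1 = 0"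
    using IVT2'[of psi_min \<mu>c 0 0] psi_min_continuous_on[of \<mu>c] mc(1) by auto
  with \<open>psi_min 0 > 0\<close> have "\<mu>1 > 0" by (cases "\<mu>1 = 0") auto
  obtain q where q: "q \<in> {-1..0}" "psi \<mu>1 q = 0" "\<And>r. r \<in> {-1..0} \<Longrightarrow> psi \<mu>1 q \<le> psi \<mu>1 r"
    using \<mu>1(1) by (rule psi_min_attained[of \<mu>1]) (use \<mu>1(3) in simp_all)
  have "A_fun H \<rho> Phi \<mu>1 > 0"
    using A_fun_pos_if_psi_vanishes[of \<mu>1 q] \<open>\<mu>1 > 0\<close> q by simp
  then obtain \<nu> where \<nu>: "0 \<le> \<nu>" "\<nu> \<le> \<mu>1" "A_fun H \<rho> Phi \<nu> = 0"
    using IVT'[of "A_fun H \<rho> Phi" 0 0 \<mu>1] A_fun_at_zero_neg A_fun_continuous_on[of \<mu>1] \<mu>1 by auto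
  then have "0 < \<nu>" "\<nu> < \<mu>c"
    using A_fun_at_zero_neg \<open>A_fun H \<rho> Phi \<mu>1 > 0\<close> \<mu>1 by (auto simp: order.order_iff_strict)
  with \<nu> mc(2) show False by blast
qed

end

section \<open>The space \<open>X\<close>\<close>

lemma continuous_on_Rbar_slice:
  assumes "continuous_on Rbar f"
  shows "continuous_on {-1..0} (\<lambda>t. f (q, t))"
proof -
  have "continuous_on {-1..0} (\<lambda>t. (q, t))" by (intro continuous_intros)
  moreover have "(\<lambda>t. (q, t)) ` {-1..0} \<subseteq> Rbar" by (auto simp: Rbar_def)
  ultimately show ?thesis using continuous_on_compose2[OF assms] by blast
qed

lemma continuous_on_Rbar_snd:
  assumes "continuous_on {-1..0} g"
  shows "continuous_on Rbar (\<lambda>x. g (snd x))"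
proof -
  have "snd ` Rbar \<subseteq> {-1..0}" by (auto simp: Rbar_def)
  then show ?thesis
    using continuous_on_compose2[OF assms continuous_on_snd[OF continuous_on_id]] by blast
qed

lemma C_ka_I_differentiable:
  "C_ka_I k \<alpha> f \<Longrightarrow> j < k \<Longrightarrow> p \<in> {-1..0} \<Longrightarrow> ((dI ^^ j) f) differentiable (at p within {-1..0})"
  unfolding C_ka_I_def by blast

lemma C_ka_I_continuous_on:
  assumes "C_ka_I k \<alpha> f" "j < k"
  shows "continuous_on {-1..0} ((dI ^^ j) f)"
proof (unfold continuous_on_eq_continuous_within, intro ballI)
  fix p :: real assume "p \<in> {-1..0}"
  then show "continuous (at p within {-1..0}) ((dI ^^ j) f)"
    by (rule differentiable_imp_continuous_within[OF C_ka_I_differentiable[OF assms]])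
qed

context
  fixes \<alpha> :: real and w :: "real \<times> real \<Rightarrow> real"
  assumes w_in_X: "in_X \<alpha> w"
begin

lemma in_X_C_ka_strip: "C_ka_strip 3 \<alpha> w"
  using w_in_X unfolding in_X_def by blast

lemma in_X_has_derivative_q:
  assumes "length ds < 3" "p \<in> {-1..0}"
  shows "((\<lambda>s. pd ds w (s, p)) has_real_derivative pd (Dq # ds) w (s, p)) (at s)"
proof -
  have "(\<lambda>s. pd ds w (s, p)) differentiable (at s)"
    using in_X_C_ka_strip assms unfolding C_ka_strip_def Rbar_def by force
  then show ?thesis
    using has_real_derivative_vector_derivative by (simp add: pdir_def pdq_def)
qed

lemma in_X_has_derivative_p:
  assumes "length ds < 3" "p \<in> {-1..0}"
  shows "((\<lambda>t. pd ds w (q, t)) has_real_derivative pd (Dp # ds) w (q, p)) (at p within {-1..0})"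
proof -
  have "(\<lambda>t. pd ds w (q, t)) differentiable (at p within {-1..0})"
    using in_X_C_ka_strip assms unfolding C_ka_strip_def Rbar_def by force
  then show ?thesis
    using has_real_derivative_vector_derivative by (simp add: pdir_def pdp_def)
qed

lemma in_X_continuous_on: "length ds \<le> 3 \<Longrightarrow> continuous_on Rbar (pd ds w)"
  using in_X_C_ka_strip unfolding C_ka_strip_def by blast

lemma in_X_decay:
  "length ds \<le> 2 \<Longrightarrow> e > 0 \<Longrightarrow> \<exists>M. \<forall>q p. M \<le> \<bar>q\<bar> \<and> -1 \<le> p \<and> p \<le> 0 \<longrightarrow> \<bar>pd ds w (q, p)\<bar> < e"
  using w_in_X unfolding in_X_def by blast

lemma in_X_even: "w (-q, p) = w (q, p)"
  using w_in_X unfolding in_X_def by blast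

lemma in_X_bottom: "w (q, -1) = 0"
  using w_in_X unfolding in_X_def by blast

lemma in_X_has_derivative_pdq: "p \<in> {-1..0} \<Longrightarrow> ((\<lambda>s. w (s, p)) has_real_derivative pdq w (s, p)) (at s)"
  using in_X_has_derivative_q[of "[]"] by (simp add: pdir_def)

lemma in_X_pdq_zero_at_axis:
  assumes "p \<in> {-1..0}"
  shows "pdq w (0, p) = 0"
proof -
  have d: "((\<lambda>s. w (s, p)) has_real_derivative pdq w (0, p)) (at 0)"
    using assms by (rule in_X_has_derivative_pdq)
  then have "((\<lambda>s. w (- s, p)) has_real_derivative - pdq w (0, p)) (at 0)"
    using DERIV_mirror[where f = "\<lambda>s. w (s, p)" and x = 0 and y = "pdq w (0, p)"] by simp
  then have "((\<lambda>s. w (s, p)) has_real_derivative - pdq w (0, p)) (at 0)"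
    by (simp add: in_X_even)
  then have "pdq w (0, p) = - pdq w (0, p)" using DERIV_unique[OF d] by blast
  then show ?thesis by simp
qed

lemma in_X_zero_if_pdq_zero:
  assumes pdq_zero: "\<And>q p. q \<ge> 0 \<Longrightarrow> p \<in> {-1..0} \<Longrightarrow> pdq w (q, p) = 0"
    and "x \<in> Rbar"
  shows "w x = 0"
proof -
  obtain q p where x: "x = (q, p)" and p: "p \<in> {-1..0}"
    using \<open>x \<in> Rbar\<close> by (cases x) (auto simp: Rbar_def)
  have "\<exists>c. \<forall>s\<in>{0..}. w (s, p) = c"
  proof (rule has_field_derivative_zero_constant)
    fix s :: real assume "s \<in> {0..}"
    then show "((\<lambda>s. w (s, p)) has_field_derivative 0) (at s within {0..})"
      using has_field_derivative_at_within[OF in_X_has_derivative_pdq[OF p, of s]] pdq_zero[of s p] p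
      by simp
  qed simp
  then obtain c where c: "\<And>s. s \<ge> 0 \<Longrightarrow> w (s, p) = c" by auto
  have "c = 0"
  proof (rule ccontr)
    assume "c \<noteq> 0"
    then obtain Q where "\<And>q p. Q \<le> \<bar>q\<bar> \<Longrightarrow> -1 \<le> p \<Longrightarrow> p \<le> 0 \<Longrightarrow> \<bar>w (q, p)\<bar> < \<bar>c\<bar>"
      using in_X_decay[of "[]" "\<bar>c\<bar>"] by auto
    then have "\<bar>w (\<bar>Q\<bar>, p)\<bar> < \<bar>c\<bar>" using p by auto
    then show False using c[of "\<bar>Q\<bar>"] by simp
  qed
  then have "w (\<bar>q\<bar>, p) = 0" using c by simp
  then show "w x = 0" using in_X_even[of q p] x by (cases "q \<ge> 0") auto
qed

end

section \<open>Solutions of the height equation\<close>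

locale height_solution = Phi_family +
  fixes \<alpha> :: real and w :: "real \<times> real \<Rightarrow> real" and F :: real
  assumes H_differentiable: "\<forall>p\<in>{-1..0}. H differentiable (at p within {-1..0})"
    and Hp_differentiable: "\<forall>p\<in>{-1..0}. dI H differentiable (at p within {-1..0})"
    and H_top: "H 0 = 1"
    and w_in_X: "in_X \<alpha> w"
    and solution: "height_eq H \<rho> w F"
begin

abbreviation I :: "real set" where "I \<equiv> {-1..0}"

lemma H_has_derivative: "p \<in> I \<Longrightarrow> (H has_real_derivative dI H p) (at p within I)"
  using H_differentiable has_real_derivative_vector_derivative by (simp add: dI_def)

lemma Hp_has_derivative: "p \<in> I \<Longrightarrow> (dI H has_real_derivative dI (dI H) p) (at p within I)"
  using Hp_differentiable has_real_derivative_vector_derivative by (simp add: dI_def)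

lemma w_has_derivative_p: "p \<in> I \<Longrightarrow> ((\<lambda>t. w (q, t)) has_real_derivative pdp w (q, p)) (at p within I)"
  using in_X_has_derivative_p[OF w_in_X, of "[]"] by (simp add: pdir_def)

lemma wq_has_derivative_q: "p \<in> I \<Longrightarrow> ((\<lambda>s. pdq w (s, p)) has_real_derivative pdq (pdq w) (s, p)) (at s)"
  using in_X_has_derivative_q[OF w_in_X, of "[Dq]"] by (simp add: pdir_def)

lemma wp_has_derivative_q: "p \<in> I \<Longrightarrow> ((\<lambda>s. pdp w (s, p)) has_real_derivative pdq (pdp w) (s, p)) (at s)"
  using in_X_has_derivative_q[OF w_in_X, of "[Dp]"] by (simp add: pdir_def)

lemma wq_has_derivative_p:
  "p \<in> I \<Longrightarrow> ((\<lambda>t. pdq w (q, t)) has_real_derivative pdp (pdq w) (q, p)) (at p within I)"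
  using in_X_has_derivative_p[OF w_in_X, of "[Dq]"] by (simp add: pdir_def)

lemma wp_has_derivative_p:
  "p \<in> I \<Longrightarrow> ((\<lambda>t. pdp w (q, t)) has_real_derivative pdp (pdp w) (q, p)) (at p within I)"
  using in_X_has_derivative_p[OF w_in_X, of "[Dp]"] by (simp add: pdir_def)

lemma w_continuous_on: "continuous_on Rbar w"
  and wq_continuous_on: "continuous_on Rbar (pdq w)"
  and wp_continuous_on: "continuous_on Rbar (pdp w)"
  and wqq_continuous_on: "continuous_on Rbar (pdq (pdq w))"
  and wpq_continuous_on: "continuous_on Rbar (pdq (pdp w))"
  using in_X_continuous_on[OF w_in_X, of "[]"] in_X_continuous_on[OF w_in_X, of "[Dq]"]
    in_X_continuous_on[OF w_in_X, of "[Dp]"] in_X_continuous_on[OF w_in_X, of "[Dq, Dq]"]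
    in_X_continuous_on[OF w_in_X, of "[Dq, Dp]"]
  by (simp_all add: pdir_def)

text \<open>\<open>hp\<close> and \<open>hq\<close> are \<open>h\<^sub>p\<close> and \<open>h\<^sub>q\<close> for \<open>h = H + w\<close>; \<open>slope_q\<close> is \<open>(h\<^sub>q / h\<^sub>p)\<^sub>q\<close>.\<close>

definition \<mu>\<^sub>F :: real where "\<mu>\<^sub>F = 1 / F\<^sup>2"

definition hp :: "real \<Rightarrow> real \<Rightarrow> real" where "hp q p = dI H p + pdp w (q, p)"

definition hq :: "real \<Rightarrow> real \<Rightarrow> real" where "hq q p = pdq w (q, p)"

definition E :: "real \<Rightarrow> real \<Rightarrow> real" where
  "E q p = (1 + (hq q p)\<^sup>2) / (2 * (hp q p)\<^sup>2) - 1 / (2 * (dI H p)\<^sup>2)"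

definition slope_q :: "real \<Rightarrow> real \<Rightarrow> real" where
  "slope_q q p = (pdq (pdq w) (q, p) * hp q p - hq q p * pdq (pdp w) (q, p)) / (hp q p)\<^sup>2"

lemma pdq_height: "p \<in> I \<Longrightarrow> pdq (\<lambda>x. H (snd x) + w x) (s, p) = hq s p"
  using DERIV_add[OF DERIV_const in_X_has_derivative_pdq[OF w_in_X]]
  by (simp add: pdq_def hq_def vector_derivative_at has_real_derivative_iff_has_vector_derivative)

lemma pdp_height: "p \<in> I \<Longrightarrow> pdp (\<lambda>x. H (snd x) + w x) (q, p) = hp q p"
proof -
  assume p: "p \<in> I"
  have "((\<lambda>t. H t + w (q, t)) has_real_derivative hp q p) (at p within I)"
    unfolding hp_def by (intro DERIV_add H_has_derivative w_has_derivative_p p)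
  then show ?thesis unfolding pdp_def
    by (intro vector_derivative_within_closed_interval)
       (use p in \<open>auto simp: has_real_derivative_iff_has_vector_derivative\<close>)
qed

lemma F_pos: "F > 0"
  using solution unfolding height_eq_def Let_def by simp

lemma mu_F_pos: "\<mu>\<^sub>F > 0"
  using F_pos by (simp add: \<mu>\<^sub>F_def)

lemma mu_F_nonneg: "\<mu>\<^sub>F \<ge> 0"
  using mu_F_pos by simp

lemma mu_F_eq_if_F_eq_powr:
  assumes "\<mu> > 0" "F = \<mu> powr (-1/2)"
  shows "\<mu>\<^sub>F = \<mu>"
proof -
  have "F\<^sup>2 = \<mu> powr (-1/2) * \<mu> powr (-1/2)" using assms by (simp add: power2_eq_square)
  also have "\<dots> = 1 / \<mu>" using assms(1) by (simp add: powr_minus_divide flip: powr_add)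
  finally show ?thesis using assms(1) by (simp add: \<mu>\<^sub>F_def)
qed

lemma hp_continuous_on: "continuous_on I (hp q)"
  unfolding hp_def[abs_def]
  using Hp_cont continuous_on_Rbar_slice[OF wp_continuous_on] by (intro continuous_intros)

lemma hq_continuous_on: "continuous_on I (hq q)"
  unfolding hq_def[abs_def] by (rule continuous_on_Rbar_slice[OF wq_continuous_on])

lemma hp_lower_bound: "\<exists>\<delta>>0. \<forall>q. \<forall>p\<in>I. \<delta> \<le> hp q p"
proof -
  obtain \<delta> where \<delta>: "\<delta> > 0" "\<forall>x\<in>Ropen. \<delta> \<le> pdp (\<lambda>x. H (snd x) + w x) x"
    using solution unfolding height_eq_def Let_def by blast
  have "\<delta> \<le> hp q p" if p: "p \<in> I" for q p
  proof (rule continuous_ge_on_closure[where S = "{-1<..<0}" and f = "hp q"])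
    show "continuous_on (closure {-1<..<0}) (hp q)" using hp_continuous_on by simp
    show "p \<in> closure {-1<..<0::real}" using p by simp
    fix t :: real assume t: "t \<in> {-1<..<0}"
    then have "\<delta> \<le> pdp (\<lambda>x. H (snd x) + w x) (q, t)" using \<delta>(2) by (auto simp: Ropen_def)
    then show "\<delta> \<le> hp q t" using pdp_height[of t q] t by simp
  qed
  then show ?thesis using \<delta>(1) by blast
qed

lemma hp_pos: "p \<in> I \<Longrightarrow> hp q p > 0"
  using hp_lower_bound by (meson less_le_trans)

definition Ep :: "real \<Rightarrow> real \<Rightarrow> real" where
  "Ep q p = vector_derivative (E q) (at p within I)"

lemma E_has_derivative: "p \<in> I \<Longrightarrow> (E q has_real_derivative Ep q p) (at p within I)"
proof -
  assume p: "p \<in> I"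
  have "hq q differentiable (at p within I)"
    unfolding hq_def real_differentiable_def using wq_has_derivative_p[OF p] by blast
  moreover have "hp q differentiable (at p within I)"
    unfolding hp_def real_differentiable_def
    using DERIV_add[OF Hp_has_derivative[OF p] wp_has_derivative_p[OF p]] by blast
  moreover have "dI H differentiable (at p within I)" using Hp_differentiable p by blast
  moreover have "dI H p > 0" using Hp_pos p by blast
  ultimately have "E q differentiable (at p within I)"
    unfolding E_def[abs_def] using hp_pos[OF p, of q]
    by (intro differentiable_diff differentiable_divide differentiable_add differentiable_const
          differentiable_power differentiable_mult) auto
  then show ?thesis unfolding Ep_def by (rule has_real_derivative_vector_derivative)
qed

lemma hq_div_hp_has_derivative_q:
  assumes p: "p \<in> I"
  shows "((\<lambda>s. hq s p / hp s p) has_real_derivative slope_q q p) (at q)"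
proof -
  have "((\<lambda>s. hp s p) has_real_derivative 0 + pdq (pdp w) (q, p)) (at q)"
    unfolding hp_def by (intro DERIV_add DERIV_const wp_has_derivative_q[OF p])
  moreover have "((\<lambda>s. hq s p) has_real_derivative pdq (pdq w) (q, p)) (at q)"
    unfolding hq_def by (rule wq_has_derivative_q[OF p])
  ultimately show ?thesis
    by (intro DERIV_cong[OF DERIV_divide]) (use hp_pos[OF p, of q] in \<open>simp_all add: slope_q_def power2_eq_square\<close>)
qed

lemma E_equation_interior:
  assumes p: "p \<in> {-1<..<0}"
  shows "Ep q p = slope_q q p - \<mu>\<^sub>F * dI \<rho> p * w (q, p)"
proof -
  have pI: "p \<in> I" using p by auto
  let ?h = "\<lambda>x. H (snd x) + w x"
  let ?G = "\<lambda>y. - (1 + (pdq ?h y)\<^sup>2) / (2 * (pdp ?h y)\<^sup>2) + 1 / (2 * (dI H (snd y))\<^sup>2)"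
  let ?K = "\<lambda>y. pdq ?h y / pdp ?h y"
  have "(q, p) \<in> Ropen" using p by (simp add: Ropen_def)
  then have eq: "pdp ?G (q, p) + pdq ?K (q, p) - (1 / F\<^sup>2) * dI \<rho> p * (?h (q, p) - H p) = 0"
    using solution unfolding height_eq_def Let_def by fastforce
  have "((\<lambda>t. ?G (q, t)) has_vector_derivative - Ep q p) (at p within I)"
  proof (rule has_vector_derivative_transform_within[OF _ zero_less_one pI])
    show "((\<lambda>t. - E q t) has_vector_derivative - Ep q p) (at p within I)"
      using DERIV_minus[OF E_has_derivative[OF pI, of q]]
      by (simp add: has_real_derivative_iff_has_vector_derivative)
    fix t assume t: "t \<in> I"
    show "- E q t = ?G (q, t)"
      using pdq_height[OF t, of q] pdp_height[OF t, of q] by (simp add: E_def minus_divide_left)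
  qed
  then have "pdp ?G (q, p) = - Ep q p" unfolding pdp_def
    by (intro vector_derivative_within_closed_interval) (use pI in auto)
  moreover have "pdq ?K (q, p) = slope_q q p"
  proof -
    have "(\<lambda>s. ?K (s, p)) = (\<lambda>s. hq s p / hp s p)"
      using pdq_height[OF pI] pdp_height[OF pI] by (simp add: fun_eq_iff)
    then show ?thesis unfolding pdq_def using hq_div_hp_has_derivative_q[OF pI, of q]
      by (simp add: has_real_derivative_iff_has_vector_derivative vector_derivative_at)
  qed
  ultimately show ?thesis using eq by (simp add: \<mu>\<^sub>F_def)
qed

lemma E_equation_top: "E q 0 = - \<mu>\<^sub>F * \<rho> 0 * w (q, 0)"
proof -
  let ?h = "\<lambda>x. H (snd x) + w x"
  have "(1 + (pdq ?h (q, 0))\<^sup>2) / (2 * (pdp ?h (q, 0))\<^sup>2) - 1 / (2 * (dI H 0)\<^sup>2)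
          + (1 / F\<^sup>2) * \<rho> 0 * (?h (q, 0) - 1) = 0"
    using solution unfolding height_eq_def Let_def by blast
  then show ?thesis
    using pdq_height[of 0 q] pdp_height[of 0 q] by (simp add: E_def \<mu>\<^sub>F_def H_top)
qed

abbreviation \<phi> :: "real \<Rightarrow> real" where "\<phi> \<equiv> Phi \<mu>\<^sub>F"
abbreviation \<psi> :: "real \<Rightarrow> real" where "\<psi> \<equiv> psi \<mu>\<^sub>F"

lemma E_continuous_on: "continuous_on I (E q)"
  by (rule continuous_on_if_has_real_derivative_within[OF E_has_derivative])

lemma slope_q_continuous_on: "continuous_on I (slope_q q)"
proof -
  have "\<forall>t\<in>I. (hp q t)\<^sup>2 \<noteq> 0" using hp_pos[of _ q] by force
  then have "continuous_on I (\<lambda>t. (pdq (pdq w) (q, t) * hp q t - hq q t * pdq (pdp w) (q, t)) / (hp q t)\<^sup>2)"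
    using continuous_on_Rbar_slice[OF wqq_continuous_on, of q]
      continuous_on_Rbar_slice[OF wpq_continuous_on, of q] hp_continuous_on[of q] hq_continuous_on[of q]
    by (intro continuous_intros) auto
  then show ?thesis unfolding slope_q_def[abs_def] .
qed

definition M :: "real \<Rightarrow> real" where "M q = integral I (\<lambda>p. \<phi> p * (hq q p / hp q p))"
definition dM :: "real \<Rightarrow> real" where "dM q = integral I (\<lambda>p. \<phi> p * slope_q q p)"
definition G :: "real \<Rightarrow> real" where
  "G q = integral I (\<lambda>p. \<psi> p * ((dI H p) ^ 3 * E q p + pdp w (q, p)))"

lemma E_integrated_by_parts:
  "\<phi> 0 * E q 0 = integral I (\<lambda>p. (dI H p) ^ 3 * \<psi> p * E q p) + dM q
     - \<mu>\<^sub>F * integral I (\<lambda>p. dI \<rho> p * \<phi> p * w (q, p))"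
proof -
  let ?f = "\<lambda>p. (dI H p) ^ 3 * \<psi> p * E q p"
  let ?g = "\<lambda>p. dI \<rho> p * \<phi> p * w (q, p)"
  have deriv: "((\<lambda>p. \<phi> p * E q p) has_vector_derivative ?f p + \<phi> p * Ep q p) (at p within I)"
    if "p \<in> I" for p
    unfolding has_real_derivative_iff_has_vector_derivative[symmetric]
    by (rule DERIV_cong[OF DERIV_mult[OF Phi_has_derivative[OF mu_F_nonneg that] E_has_derivative[OF that]]])
       (simp add: algebra_simps)
  have "((\<lambda>p. ?f p + \<phi> p * Ep q p) has_integral \<phi> 0 * E q 0) I"
    using fundamental_theorem_of_calculus[of "-1" 0, OF _ deriv] by (simp add: Phi_bottom[OF mu_F_nonneg])
  \<comment> \<open>\<open>Ep\<close> need not be integrable by itself; the interior equation replaces it a.e.\<close>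
  moreover have "((\<lambda>p. ?f p + \<phi> p * Ep q p) has_integral \<phi> 0 * E q 0) I
      \<longleftrightarrow> ((\<lambda>p. ?f p + (\<phi> p * slope_q q p - \<mu>\<^sub>F * ?g p)) has_integral \<phi> 0 * E q 0) I"
  proof (rule has_integral_spike_finite_eq[of "{-1, 0}"])
    fix p assume "p \<in> I - {-1, 0}"
    then show "?f p + (\<phi> p * slope_q q p - \<mu>\<^sub>F * ?g p) = ?f p + \<phi> p * Ep q p"
      using E_equation_interior[of p q] by (simp add: right_diff_distrib)
  qed simp
  moreover have "((\<lambda>p. ?f p + (\<phi> p * slope_q q p - \<mu>\<^sub>F * ?g p))
      has_integral integral I ?f + (dM q - \<mu>\<^sub>F * integral I ?g)) I"
    unfolding dM_def
    using Hp_cont psi_continuous_on[OF mu_F_nonneg] E_continuous_on[of q] Phi_continuous_on[OF mu_F_nonneg]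
      slope_q_continuous_on[of q] rho_p_cont continuous_on_Rbar_slice[OF w_continuous_on, of q]
    by (intro has_integral_add has_integral_diff has_integral_mult_right integral_has_integral_Icc
        continuous_intros)
  ultimately have "\<phi> 0 * E q 0 = integral I ?f + (dM q - \<mu>\<^sub>F * integral I ?g)"
    using has_integral_unique by blast
  then show ?thesis by simp
qed

lemma w_integrated_by_parts:
  "\<psi> 0 * w (q, 0) = \<mu>\<^sub>F * integral I (\<lambda>p. dI \<rho> p * \<phi> p * w (q, p))
     + integral I (\<lambda>p. \<psi> p * pdp w (q, p))"
proof -
  let ?g = "\<lambda>p. dI \<rho> p * \<phi> p * w (q, p)"
  let ?k = "\<lambda>p. \<psi> p * pdp w (q, p)"
  have deriv: "((\<lambda>p. \<psi> p * w (q, p)) has_vector_derivative \<mu>\<^sub>F * ?g p + ?k p) (at p within I)"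
    if "p \<in> I" for p
    unfolding has_real_derivative_iff_has_vector_derivative[symmetric]
    by (rule DERIV_cong[OF DERIV_mult[OF psi_has_derivative[OF mu_F_nonneg that] w_has_derivative_p[OF that]]])
       (simp add: algebra_simps)
  have "((\<lambda>p. \<mu>\<^sub>F * ?g p + ?k p) has_integral \<psi> 0 * w (q, 0)) I"
    using fundamental_theorem_of_calculus[of "-1" 0, OF _ deriv] by (simp add: in_X_bottom[OF w_in_X])
  moreover have "((\<lambda>p. \<mu>\<^sub>F * ?g p + ?k p) has_integral \<mu>\<^sub>F * integral I ?g + integral I ?k) I"
    using rho_p_cont Phi_continuous_on[OF mu_F_nonneg] continuous_on_Rbar_slice[OF w_continuous_on, of q]
      psi_continuous_on[OF mu_F_nonneg] continuous_on_Rbar_slice[OF wp_continuous_on, of q]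
    by (intro has_integral_add has_integral_mult_right integral_has_integral_Icc continuous_intros)
  ultimately show ?thesis using has_integral_unique by blast
qed

lemma balance_identity: "A_fun H \<rho> Phi \<mu>\<^sub>F * w (q, 0) + dM q + G q = 0"
proof -
  have "G q = integral I (\<lambda>p. (dI H p) ^ 3 * \<psi> p * E q p) + integral I (\<lambda>p. \<psi> p * pdp w (q, p))"
  proof -
    have "((\<lambda>p. (dI H p) ^ 3 * \<psi> p * E q p + \<psi> p * pdp w (q, p)) has_integral
        integral I (\<lambda>p. (dI H p) ^ 3 * \<psi> p * E q p) + integral I (\<lambda>p. \<psi> p * pdp w (q, p))) I"
      using Hp_cont psi_continuous_on[OF mu_F_nonneg] E_continuous_on[of q]
        continuous_on_Rbar_slice[OF wp_continuous_on, of q]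
      by (intro has_integral_add integral_has_integral_Icc continuous_intros)
    then show ?thesis unfolding G_def by (simp add: algebra_simps integral_unique)
  qed
  then show ?thesis
    using E_integrated_by_parts[of q] w_integrated_by_parts[of q] E_equation_top[of q]
    by (simp add: A_fun_eq algebra_simps)
qed

lemma M_integrand_continuous_on: "continuous_on I (\<lambda>p. \<phi> p * (hq q p / hp q p))"
proof -
  have "\<forall>t\<in>I. hp q t \<noteq> 0" using hp_pos[of _ q] by force
  then show ?thesis
    using Phi_continuous_on[OF mu_F_nonneg] hq_continuous_on[of q] hp_continuous_on[of q]
    by (intro continuous_intros) auto
qed

lemma dM_integrand_continuous_on:
  "continuous_on (UNIV \<times> cbox (-1) 0) (\<lambda>(x, t). \<phi> t * slope_q x t)"
proof -
  let ?C = "\<lambda>y. (pdq (pdq w) y * (dI H (snd y) + pdp w y) - pdq w y * pdq (pdp w) y)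
      / (dI H (snd y) + pdp w y)\<^sup>2"
  have "\<forall>y\<in>Rbar. (dI H (snd y) + pdp w y)\<^sup>2 \<noteq> 0"
  proof
    fix y :: "real \<times> real" assume "y \<in> Rbar"
    then have "snd y \<in> I" by (auto simp: Rbar_def)
    then have "hp (fst y) (snd y) > 0" by (rule hp_pos)
    then show "(dI H (snd y) + pdp w y)\<^sup>2 \<noteq> 0" by (simp add: hp_def)
  qed
  then have "continuous_on Rbar (\<lambda>y. \<phi> (snd y) * ?C y)"
    using wqq_continuous_on wpq_continuous_on wq_continuous_on wp_continuous_on
      continuous_on_Rbar_snd[OF Hp_cont] continuous_on_Rbar_snd[OF Phi_continuous_on[OF mu_F_nonneg]]
    by (intro continuous_intros) auto
  moreover have "\<phi> (snd y) * ?C y = (\<lambda>(x, t). \<phi> t * slope_q x t) y" for y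
    by (simp add: slope_q_def hp_def hq_def split: prod.split)
  ultimately have "continuous_on Rbar (\<lambda>(x, t). \<phi> t * slope_q x t)"
    by (simp only:)
  then show ?thesis by (simp add: Rbar_def cbox_interval)
qed

lemma M_has_derivative: "(M has_real_derivative dM q) (at q)"
proof -
  have "((\<lambda>x. integral (cbox (-1) 0) (\<lambda>t. \<phi> t * (hq x t / hp x t))) has_field_derivative
          integral (cbox (-1) 0) (\<lambda>t. \<phi> t * slope_q q t)) (at q within UNIV)"
  proof (rule leibniz_rule_field_derivative[OF _ _ dM_integrand_continuous_on])
    fix x t :: real assume "t \<in> cbox (-1) 0"
    then have t: "t \<in> I" by (simp add: cbox_interval)
    show "((\<lambda>x. \<phi> t * (hq x t / hp x t)) has_field_derivative \<phi> t * slope_q x t) (at x within UNIV)"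
      by (intro DERIV_cmult hq_div_hp_has_derivative_q[OF t])
  next
    fix x :: real
    show "(\<lambda>t. \<phi> t * (hq x t / hp x t)) integrable_on cbox (-1) 0"
      using M_integrand_continuous_on[of x] by (simp add: cbox_interval integrable_continuous_interval)
  qed auto
  then show ?thesis unfolding M_def[abs_def] dM_def by (simp add: cbox_interval)
qed

lemma M_zero: "M 0 = 0"
proof -
  have "integral I (\<lambda>p. \<phi> p * (hq 0 p / hp 0 p)) = integral I (\<lambda>p. 0)"
    by (rule integral_cong) (simp add: hq_def in_X_pdq_zero_at_axis[OF w_in_X])
  then show ?thesis by (simp add: M_def)
qed

lemma M_tendsto_zero: "(M \<longlongrightarrow> 0) at_top"
proof (rule tendstoI)
  fix e :: real assume e: "e > 0"
  obtain \<delta> where \<delta>: "\<delta> > 0" "\<And>q p. p \<in> I \<Longrightarrow> \<delta> \<le> hp q p" using hp_lower_bound by blast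
  obtain P where P: "P \<ge> 0" "\<forall>p\<in>I. \<bar>\<phi> p\<bar> \<le> P"
    using continuous_on_Icc_abs_bound[OF Phi_continuous_on[OF mu_F_nonneg]] by blast
  define e' where "e' = e * \<delta> / (P + 1)"
  have e': "e' > 0" using e \<delta> P by (simp add: e'_def)
  obtain Q where Q: "\<forall>q p. Q \<le> \<bar>q\<bar> \<and> -1 \<le> p \<and> p \<le> 0 \<longrightarrow> \<bar>pd [Dq] w (q, p)\<bar> < e'"
    using in_X_decay[OF w_in_X, of "[Dq]" e'] e' by auto
  have bound: "\<bar>M q\<bar> \<le> e * (P / (P + 1))" if q: "q \<ge> Q" for q
  proof -
    have "norm (integral I (\<lambda>p. \<phi> p * (hq q p / hp q p))) \<le> e * (P / (P + 1)) * (0 - (-1))"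
    proof (rule integral_bound)
      show "continuous_on I (\<lambda>p. \<phi> p * (hq q p / hp q p))" by (rule M_integrand_continuous_on)
      fix p assume p: "p \<in> I"
      have "Q \<le> \<bar>q\<bar>" using q by linarith
      then have "\<bar>hq q p\<bar> \<le> e'" using Q p by (simp add: hq_def pdir_def less_imp_le)
      moreover have "\<delta> \<le> hp q p" using \<delta> p by blast
      ultimately have "\<bar>\<phi> p\<bar> * \<bar>hq q p\<bar> / hp q p \<le> P * e' / \<delta>"
        using \<delta>(1) P p by (intro frac_le mult_mono) auto
      also have "\<dots> = e * (P / (P + 1))"
      proof -
        have "e' = e / (P + 1) * \<delta>" by (simp add: e'_def)
        then show ?thesis using \<delta>(1) by simp
      qed
      finally show "norm (\<phi> p * (hq q p / hp q p)) \<le> e * (P / (P + 1))"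
        using hp_pos[OF p, of q] by (simp add: abs_mult)
    qed simp
    then show ?thesis by (simp add: M_def)
  qed
  have "e * (P / (P + 1)) < e" using e P(1) by (simp add: field_simps)
  then have "dist (M q) 0 < e" if "q \<ge> Q" for q
    using bound[OF that] by (simp add: dist_real_def)
  then show "\<forall>\<^sub>F q in at_top. dist (M q) 0 < e"
    unfolding eventually_at_top_linorder by blast
qed

lemma G_integrand_lower_bound:
  assumes p: "p \<in> I"
  shows "(dI H p) ^ 3 * E q p + pdp w (q, p) \<ge> (dI H p) ^ 3 * (hq q p)\<^sup>2 / (2 * (hp q p)\<^sup>2)"
proof -
  have H: "dI H p > 0" using Hp_pos p by blast
  have "(hp q p - dI H p)\<^sup>2 * (2 * hp q p + dI H p) / (2 * (hp q p)\<^sup>2) \<ge> 0"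
    using hp_pos[OF p, of q] H by (intro divide_nonneg_pos mult_nonneg_nonneg) auto
  moreover have "pdp w (q, p) = hp q p - dI H p" by (simp add: hp_def)
  ultimately show ?thesis
    unfolding E_def using Bernoulli_excess_identity[OF hp_pos[OF p, of q] H, of "hq q p"] by simp
qed

lemma G_integrand_nonneg:
  assumes "p \<in> I"
  shows "(dI H p) ^ 3 * E q p + pdp w (q, p) \<ge> 0"
proof -
  have "dI H p > 0" using Hp_pos assms by blast
  then have "(dI H p) ^ 3 * (hq q p)\<^sup>2 / (2 * (hp q p)\<^sup>2) \<ge> 0" by simp
  then show ?thesis using G_integrand_lower_bound[OF assms, of q] by linarith
qed

lemma G_integrand_continuous_on: "continuous_on I (\<lambda>p. \<psi> p * ((dI H p) ^ 3 * E q p + pdp w (q, p)))"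
  using psi_continuous_on[OF mu_F_nonneg] Hp_cont E_continuous_on[of q]
    continuous_on_Rbar_slice[OF wp_continuous_on, of q]
  by (intro continuous_intros)

context
  assumes psi_nonneg: "\<forall>p\<in>I. \<psi> p \<ge> 0"
begin

lemma G_nonneg: "G q \<ge> 0"
  unfolding G_def
proof (rule integral_nonneg)
  show "(\<lambda>p. \<psi> p * ((dI H p) ^ 3 * E q p + pdp w (q, p))) integrable_on I"
    using G_integrand_continuous_on by (rule integrable_continuous_interval)
  fix p assume "p \<in> I"
  then show "0 \<le> \<psi> p * ((dI H p) ^ 3 * E q p + pdp w (q, p))"
    using psi_nonneg G_integrand_nonneg by simp
qed

lemma hq_zero_if_G_zero:
  assumes G0: "G q = 0" and p: "p \<in> I" and psi_pos: "\<psi> p > 0"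
  shows "hq q p = 0"
proof -
  let ?g = "\<lambda>p. \<psi> p * ((dI H p) ^ 3 * E q p + pdp w (q, p))"
  have "(?g has_integral 0) I"
    using integral_has_integral_Icc[OF G_integrand_continuous_on[of q]] G0 by (simp add: G_def)
  then have "?g p = 0"
    using has_integral_0_cbox_imp_0[of "-1" 0 ?g p] G_integrand_continuous_on[of q]
      psi_nonneg G_integrand_nonneg p by (simp add: cbox_interval box_real)
  then have "(dI H p) ^ 3 / (2 * (hp q p)\<^sup>2) * (hq q p)\<^sup>2 \<le> 0"
    using psi_pos G_integrand_lower_bound[OF p, of q] by simp
  moreover have "(dI H p) ^ 3 / (2 * (hp q p)\<^sup>2) > 0"
    using Hp_pos p hp_pos[OF p, of q] by simp
  ultimately have "(hq q p)\<^sup>2 \<le> 0" by (metis mult_le_cancel_left_pos mult_zero_right)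
  then show ?thesis by simp
qed

context
  assumes top_sign: "\<forall>q\<ge>0. A_fun H \<rho> Phi \<mu>\<^sub>F * w (q, 0) \<ge> 0"
begin

lemma dM_nonpos:
  assumes "q \<ge> 0"
  shows "dM q \<le> 0"
proof -
  have "A_fun H \<rho> Phi \<mu>\<^sub>F * w (q, 0) \<ge> 0" using top_sign assms by simp
  then show ?thesis using balance_identity[of q] G_nonneg[of q] by linarith
qed

lemma M_vanishes: "q \<ge> 0 \<Longrightarrow> M q = 0"
proof -
  assume q: "q \<ge> 0"
  have antimono: "M y \<le> M x" if "0 \<le> x" "x \<le> y" for x y
    using that dM_nonpos
    by (intro deriv_within_nonpos_imp_antimono[of x y M dM])
       (auto intro: has_field_derivative_at_within[OF M_has_derivative])
  have "M q \<le> 0" using antimono[of 0 q] q M_zero by simp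
  moreover have "0 \<le> M q"
  proof (rule tendsto_upperbound[OF M_tendsto_zero])
    show "\<forall>\<^sub>F y in at_top. M y \<le> M q"
      unfolding eventually_at_top_linorder using antimono q by blast
  qed simp
  ultimately show ?thesis by simp
qed

lemma dM_vanishes: "q > 0 \<Longrightarrow> dM q = 0"
proof -
  assume q: "q > 0"
  have "((\<lambda>_. 0) has_real_derivative dM q) (at q)"
  proof (rule has_field_derivative_transform_within_open[OF M_has_derivative, where S = "{0<..}"])
    show "\<And>x. x \<in> {0<..} \<Longrightarrow> M x = 0" using M_vanishes by simp
  qed (use q in auto)
  then show ?thesis using DERIV_unique DERIV_const by blast
qed

lemma top_term_and_G_vanish:
  assumes "q > 0"
  shows "A_fun H \<rho> Phi \<mu>\<^sub>F * w (q, 0) = 0 \<and> G q = 0"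
proof -
  have "A_fun H \<rho> Phi \<mu>\<^sub>F * w (q, 0) \<ge> 0" using top_sign assms by simp
  then show ?thesis using balance_identity[of q] dM_vanishes[OF assms] G_nonneg[of q] by linarith
qed

lemma w_vanishes_if_psi_pos:
  assumes "\<forall>p\<in>I. \<psi> p > 0"
  shows "\<forall>x\<in>Rbar. w x = 0"
proof
  fix x assume "x \<in> Rbar"
  show "w x = 0"
  proof (rule in_X_zero_if_pdq_zero[OF w_in_X _ \<open>x \<in> Rbar\<close>])
    fix q p :: real assume q: "q \<ge> 0" and p: "p \<in> I"
    show "pdq w (q, p) = 0"
    proof (cases "q = 0")
      case True
      then show ?thesis using in_X_pdq_zero_at_axis[OF w_in_X p] by simp
    next
      case False
      then have "G q = 0" using top_term_and_G_vanish q by simp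
      then show ?thesis using hq_zero_if_G_zero p assms by (simp add: hq_def)
    qed
  qed
qed

end

end

end

locale stratified_height_solution = height_solution + stratified_Phi_family
begin

lemma A_fun_neg_if_top_pos:
  assumes w_top: "\<forall>q. w (q, 0) > 0" and psi_nonneg: "\<forall>p\<in>I. \<psi> p \<ge> 0"
  shows "A_fun H \<rho> Phi \<mu>\<^sub>F < 0"
proof (rule ccontr)
  assume "\<not> A_fun H \<rho> Phi \<mu>\<^sub>F < 0"
  then have top_sign: "\<forall>q\<ge>0. A_fun H \<rho> Phi \<mu>\<^sub>F * w (q, 0) \<ge> 0"
    using w_top by (simp add: less_imp_le)
  have "A_fun H \<rho> Phi \<mu>\<^sub>F * w (1, 0) = 0"
    using top_term_and_G_vanish[OF psi_nonneg top_sign, of 1] by simp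
  moreover have "w (1, 0) > 0" using w_top by blast
  ultimately have "A_fun H \<rho> Phi \<mu>\<^sub>F = 0" by simp
  have "\<forall>p\<in>I. \<psi> p > 0"
  proof (rule ballI, rule ccontr)
    fix p assume "p \<in> I" "\<not> \<psi> p > 0"
    then have "A_fun H \<rho> Phi \<mu>\<^sub>F > 0"
      using A_fun_pos_if_psi_vanishes[OF mu_F_nonneg psi_nonneg mu_F_pos] by simp
    then show False using \<open>A_fun H \<rho> Phi \<mu>\<^sub>F = 0\<close> by simp
  qed
  then have "w (1, 0) = 0"
    using w_vanishes_if_psi_pos[OF psi_nonneg top_sign] by (simp add: Rbar_def)
  with \<open>w (1, 0) > 0\<close> show False by simp
qed

lemma w_vanishes_if_critical:
  assumes "is_mu_cr H \<rho> Phi \<mu>\<^sub>F"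
  shows "\<forall>x\<in>Rbar. w x = 0"
proof -
  have psi_pos: "\<forall>p\<in>I. \<psi> p > 0" using psi_pos_if_critical[OF assms] by blast
  moreover have "A_fun H \<rho> Phi \<mu>\<^sub>F = 0" using assms by (simp add: is_mu_cr_def)
  ultimately show ?thesis
    using w_vanishes_if_psi_pos psi_pos by (simp add: less_imp_le)
qed

end

theorem theorem4p4:
  fixes \<alpha> :: real and \<rho> H :: "real \<Rightarrow> real"
    and Phi :: "real \<Rightarrow> real \<Rightarrow> real"
    and w :: "real \<times> real \<Rightarrow> real" and F :: real
  assumes alpha: "0 < \<alpha>" "\<alpha> < 1"
    and rho_reg: "C_ka_I 2 \<alpha> \<rho>"
    and rho_pos: "\<forall>p\<in>{-1..0}. \<rho> p > 0"
    and rho_p: "\<forall>p\<in>{-1..0}. dI \<rho> p \<le> 0"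
    and H_reg: "C_ka_I 3 \<alpha> H"
    and H_bd: "H (-1) = 0" "H 0 = 1"
    and H_p: "\<forall>p\<in>{-1..0}. dI H p > 0"
    and Phi: "\<forall>\<mu>\<ge>0. Phi_sol H \<rho> \<mu> (Phi \<mu>)"
    and wX: "in_X \<alpha> w"
    and sol: "height_eq H \<rho> w F"
  shows "((\<forall>q. w (q, 0) > 0) \<and> (\<forall>p\<in>{-1..0}. dI (Phi (1 / F\<^sup>2)) p \<ge> 0)
            \<longrightarrow> A_fun H \<rho> Phi (1 / F\<^sup>2) < 0)
       \<and> (\<forall>\<mu>. is_mu_cr H \<rho> Phi \<mu> \<and> F = \<mu> powr (-1/2)
            \<longrightarrow> (\<forall>x\<in>Rbar. w x = 0))"
proof -
  interpret stratified_height_solution H \<rho> Phi \<alpha> w F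
    using C_ka_I_continuous_on[OF H_reg, of 1] C_ka_I_continuous_on[OF rho_reg, of 1]
      C_ka_I_differentiable[OF H_reg, of 0] C_ka_I_differentiable[OF H_reg, of 1]
      H_p Phi H_bd(2) wX sol rho_p rho_pos
    by unfold_locales simp_all
  have mu: "1 / F\<^sup>2 = \<mu>\<^sub>F" by (simp add: \<mu>\<^sub>F_def)
  show ?thesis
  proof (intro conjI impI allI)
    assume "(\<forall>q. w (q, 0) > 0) \<and> (\<forall>p\<in>{-1..0}. dI (Phi (1 / F\<^sup>2)) p \<ge> 0)"
    then show "A_fun H \<rho> Phi (1 / F\<^sup>2) < 0"
      using A_fun_neg_if_top_pos psi_nonneg_if_Phi_p_nonneg by (simp add: mu)
  next
    fix \<mu> assume "is_mu_cr H \<rho> Phi \<mu> \<and> F = \<mu> powr (-1/2)"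
    then show "\<forall>x\<in>Rbar. w x = 0"
      using w_vanishes_if_critical mu_F_eq_if_F_eq_powr by (auto simp: is_mu_cr_def)
  qed
qed

end
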